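(* Let $q$ be a prime power and suppose there exists a linear $(t_i,t_o,s,q)$-AONT with $2\le t_i\le t_o$. Then \[ s\le \frac{(t_o-1)(q^{t_i}-1)}{(t_i-1)(q-1)}.\]
   Context: A linear $(t_i,t_o,s,q)$-AONT is given by an invertible $s\times s$ matrix $M$ over $\mathbb{F}_q$ defining the map $\mathbf{x}\mapsto\mathbf{y}=\mathbf{x}M^{-1}$ on row vectors of $\mathbb{F}_q^s$, such that for every set $I$ of $t_i$ input coordinates and every set $J$ of $s-t_o$ output coordinates, the pair $((x_i)_{i\in I},(y_j)_{j\in J})$ takes every value in $\mathbb{F}_q^{t_i+s-t_o}$ equally often as $\mathbf{x}$ ranges over $\mathbb{F}_q^s$. Equivalently, $M$ is invertible and every $t_o\times t_i$ submatrix of $M$ has rank $t_i$. *)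

theory Defs
  imports "HOL-Analysis.Analysis"
begin

text \<open>Linear (t_i, t_o, s, q)-AONT over the finite field 'a (q = CARD('a)),
  with s = CARD('s). The matrix M defines x \<mapsto> y = x M^{-1} on row vectors.\<close>

definition linear_AONT :: "nat \<Rightarrow> nat \<Rightarrow> ('a::{finite,field}) ^'s::finite^'s \<Rightarrow> bool" where
  "linear_AONT ti to M \<longleftrightarrow>
     invertible M \<and> ti \<le> to \<and> to \<le> CARD('s) \<and>
     (\<forall>I J :: 's set. card I = ti \<and> card J = CARD('s) - to \<longrightarrow>
        (\<forall>a b a' b' :: 's \<Rightarrow> 'a.
           card {x :: 'a^'s. (\<forall>i\<in>I. x $ i = a i) \<and> (\<forall>j\<in>J. (x v* matrix_inv M) $ j = b j)}
         = card {x :: 'a^'s. (\<forall>i\<in>I. x $ i = a' i) \<and> (\<forall>j\<in>J. (x v* matrix_inv M) $ j = b' j)}))"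

end

theory Submission
  imports Defs
begin

text \<open>Fix a set \<open>I\<close> of \<open>t\<^sub>i\<close> input coordinates. Suppose a coefficient vector \<open>c\<close>, nonzero
  on \<open>I\<close>, annihilated \<open>t\<^sub>o\<close> rows \<open>K\<close> of \<open>M\<close> restricted to the columns \<open>I\<close>. Every input
  \<open>x = y M\<close> whose output \<open>y\<close> vanishes off \<open>K\<close> then satisfies \<open>\<Sum>\<^sub>i\<^sub>\<in>\<^sub>I c\<^sub>i x\<^sub>i = 0\<close>, so \<open>x\<^sub>I\<close>
  can never be the unit vector at a coordinate where \<open>c\<close> is nonzero, whereas the AONT
  property makes every value of \<open>x\<^sub>I\<close> occur. Hence each of the \<open>q^t\<^sub>i - 1\<close> nonzero \<open>c\<close>
  annihilates at most \<open>t\<^sub>o - 1\<close> rows, while each row is annihilated by at least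
  \<open>q^(t\<^sub>i-1) - 1\<close> of them. Double counting gives \<open>s (q^(t\<^sub>i-1) - 1) \<le> (t\<^sub>o - 1)(q^t\<^sub>i - 1)\<close>,
  and Bernoulli's inequality \<open>q^(t\<^sub>i-1) - 1 \<ge> (t\<^sub>i - 1)(q - 1)\<close> turns this into the bound.\<close>

lemma matrix_inv_left:
  fixes M :: "'a::field^'n^'m"
  assumes "invertible M"
  shows "matrix_inv M ** M = mat 1"
proof -
  have "\<exists>A'::'a^'m^'n. M ** A' = mat 1 \<and> A' ** M = mat 1"
    using assms unfolding invertible_def by blast
  from someI_ex[OF this] show ?thesis unfolding matrix_inv_def by blast
qed

lemma sum_vector_matrix_mult_swap:
  fixes y :: "'a::comm_semiring_1^'m" and M :: "'a^'n^'m"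
  shows "(\<Sum>i\<in>I. c i * (y v* M) $ i) = (\<Sum>k\<in>UNIV. y $ k * (\<Sum>i\<in>I. c i * M $ k $ i))"
  unfolding vector_matrix_mult_def vec_lambda_beta sum_distrib_left
  by (subst sum.swap) (simp add: mult.left_commute)

lemma card_UNIV_field_ge_2: "2 \<le> CARD('a::{finite,field})"
proof -
  have "card {0::'a, 1} \<le> CARD('a)"
    by (rule card_mono) auto
  then show ?thesis
    by simp
qed

lemma card_PiE_UNIV:
  "finite I \<Longrightarrow> card (I \<rightarrow>\<^sub>E (UNIV :: 'a::finite set)) = CARD('a) ^ card I"
  by (simp add: card_PiE)

lemma card_PiE_nonzero:
  assumes "finite I"
  shows "card {c \<in> I \<rightarrow>\<^sub>E (UNIV :: 'a::{finite,zero} set). \<exists>i\<in>I. c i \<noteq> 0} = CARD('a) ^ card I - 1"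
proof -
  have "{c \<in> I \<rightarrow>\<^sub>E (UNIV :: 'a set). \<exists>i\<in>I. c i \<noteq> 0} = (I \<rightarrow>\<^sub>E UNIV) - {\<lambda>i\<in>I. 0}"
    by (auto simp: fun_eq_iff PiE_iff extensional_def)
  then show ?thesis
    using assms by (simp add: card_PiE_UNIV)
qed

lemma card_PiE_linear_equation_ge:
  fixes r :: "'i \<Rightarrow> 'a::{finite,field}"
  assumes I: "finite I" "I \<noteq> {}"
  shows "CARD('a) ^ (card I - 1) \<le> card {c \<in> I \<rightarrow>\<^sub>E UNIV. (\<Sum>i\<in>I. c i * r i) = 0}"
    (is "_ \<le> card ?ker")
proof (cases "\<forall>i\<in>I. r i = 0")
  case True
  then have "?ker = I \<rightarrow>\<^sub>E UNIV"
    by auto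
  then show ?thesis
    using I by (simp add: card_PiE_UNIV power_increasing)
next
  case False
  then obtain i0 where i0: "i0 \<in> I" "r i0 \<noteq> 0"
    by blast
  define solve where "solve f = f(i0 := - (\<Sum>i\<in>I - {i0}. f i * r i) / r i0)" for f :: "'i \<Rightarrow> 'a"
  have "inj_on solve (I - {i0} \<rightarrow>\<^sub>E (UNIV :: 'a set))"
  proof (rule inj_onI, rule PiE_ext)
    show "f i = g i" if "solve f = solve g" "i \<in> I - {i0}" for f g i
      using fun_cong[OF that(1), of i] that(2) by (simp add: solve_def)
  qed
  moreover have "solve ` (I - {i0} \<rightarrow>\<^sub>E (UNIV :: 'a set)) \<subseteq> ?ker"
  proof (rule image_subsetI)
    fix f :: "'i \<Rightarrow> 'a" assume f: "f \<in> I - {i0} \<rightarrow>\<^sub>E UNIV"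
    have "solve f \<in> I \<rightarrow>\<^sub>E UNIV"
      using f i0 by (auto simp: solve_def PiE_iff extensional_def)
    moreover have "(\<Sum>i\<in>I. solve f i * r i) = solve f i0 * r i0 + (\<Sum>i\<in>I - {i0}. f i * r i)"
      using I i0 by (simp add: sum.remove) (auto simp: solve_def intro: sum.cong)
    moreover have "solve f i0 * r i0 = - (\<Sum>i\<in>I - {i0}. f i * r i)"
      using i0 by (simp add: solve_def)
    ultimately show "solve f \<in> ?ker"
      by simp
  qed
  ultimately have "card (I - {i0} \<rightarrow>\<^sub>E (UNIV :: 'a set)) \<le> card ?ker"
    using I by (intro card_inj_on_le) (auto intro: finite_subset[OF _ finite_PiE])
  then show ?thesis
    using I i0 by (simp add: card_PiE_UNIV)
qed

lemma card_PiE_nonzero_linear_equation_ge: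
  fixes r :: "'i \<Rightarrow> 'a::{finite,field}"
  assumes "finite I" "I \<noteq> {}"
  shows "CARD('a) ^ (card I - 1) - 1
    \<le> card {c \<in> I \<rightarrow>\<^sub>E UNIV. (\<exists>i\<in>I. c i \<noteq> 0) \<and> (\<Sum>i\<in>I. c i * r i) = 0}"
proof -
  have "{c \<in> I \<rightarrow>\<^sub>E UNIV. (\<exists>i\<in>I. c i \<noteq> 0) \<and> (\<Sum>i\<in>I. c i * r i) = 0}
      = {c \<in> I \<rightarrow>\<^sub>E UNIV. (\<Sum>i\<in>I. c i * r i) = 0} - {\<lambda>i\<in>I. 0}"
    by (auto simp: fun_eq_iff PiE_iff extensional_def)
  then show ?thesis
    using card_PiE_linear_equation_ge[OF assms, of r] by simp
qed

lemma double_counting_le: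
  assumes "finite A" "finite B"
    and "\<And>b. b \<in> B \<Longrightarrow> m \<le> card {a\<in>A. R a b}"
    and "\<And>a. a \<in> A \<Longrightarrow> card {b\<in>B. R a b} \<le> n"
  shows "card B * m \<le> card A * n"
proof -
  have card_filter: "card {x\<in>X. P x} = (\<Sum>x\<in>X. if P x then 1 else 0)" if "finite X" for X and P :: "'x \<Rightarrow> bool"
    using that by (simp add: sum.inter_filter[symmetric])
  have "card B * m = (\<Sum>b\<in>B. m)" by simp
  also have "\<dots> \<le> (\<Sum>b\<in>B. card {a\<in>A. R a b})"
    by (rule sum_mono) (rule assms(3))
  also have "\<dots> = (\<Sum>a\<in>A. card {b\<in>B. R a b})"
    using assms(1,2) by (simp add: card_filter) (rule sum.swap)
  also have "\<dots> \<le> (\<Sum>a\<in>A. n)"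
    by (rule sum_mono) (rule assms(4))
  finally show ?thesis by simp
qed

lemma real_bound_from_count:
  fixes q s t u :: nat
  assumes q: "2 \<le> q" and t: "2 \<le> t" and u: "1 \<le> u"
    and count: "s * (q ^ (t - 1) - 1) \<le> (q ^ t - 1) * (u - 1)"
  shows "real s \<le> (real u - 1) * (real q ^ t - 1) / ((real t - 1) * (real q - 1))"
proof -
  have "(real t - 1) * (real q - 1) \<le> real q ^ (t - 1) - 1"
    using Bernoulli_inequality[of "real q - 1" "t - 1"] q t by simp
  then have "real s * ((real t - 1) * (real q - 1)) \<le> real s * (real q ^ (t - 1) - 1)"
    by (rule mult_left_mono) simp
  also have "\<dots> \<le> (real u - 1) * (real q ^ t - 1)"
  proof -
    have "1 \<le> q ^ (t - 1)" "1 \<le> q ^ t"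
      using q by simp_all
    then show ?thesis
      using of_nat_mono[OF count, where 'a = real] u by (simp add: mult.commute)
  qed
  finally show ?thesis
    using q t by (simp add: pos_le_divide_eq)
qed

lemma linear_AONT_inputs_attainable:
  fixes M :: "'a::{finite,field}^'s::finite^'s"
  assumes "linear_AONT ti to M" "card I = ti" "card J = CARD('s) - to"
  shows "\<exists>x. (\<forall>i\<in>I. x $ i = a i) \<and> (\<forall>j\<in>J. (x v* matrix_inv M) $ j = 0)"
proof -
  let ?S = "\<lambda>a. {x :: 'a^'s. (\<forall>i\<in>I. x $ i = a i) \<and> (\<forall>j\<in>J. (x v* matrix_inv M) $ j = 0)}"
  have "0 \<in> ?S (\<lambda>_. 0)"
    by simp
  then have "0 < card (?S (\<lambda>_. 0))"
    by (auto simp only: card_gt_0_iff finite)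
  also have "card (?S (\<lambda>_. 0)) = card (?S a)"
    using assms unfolding linear_AONT_def by (elim conjE allE[of _ I] allE[of _ J]) auto
  finally show ?thesis
    unfolding card_gt_0_iff by blast
qed

lemma linear_AONT_submatrix_kernel:
  fixes M :: "'a::{finite,field}^'s::finite^'s"
  assumes aont: "linear_AONT ti to M" and I: "card I = ti" and K: "card K = to"
    and c: "\<forall>k\<in>K. (\<Sum>i\<in>I. c i * M $ k $ i) = 0" and i0: "i0 \<in> I"
  shows "c i0 = 0"
proof -
  have "card (UNIV - K) = CARD('s) - to"
    using K by (simp add: card_Diff_subset)
  then obtain x where x_I: "\<forall>i\<in>I. x $ i = (if i = i0 then 1 else 0)"
    and y_J: "\<forall>j\<in>UNIV - K. (x v* matrix_inv M) $ j = 0"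
    using linear_AONT_inputs_attainable[OF aont I, of "UNIV - K" "\<lambda>i. if i = i0 then 1 else 0"] by blast
  define y where "y = x v* matrix_inv M"
  have "x = y v* M"
    using aont unfolding y_def linear_AONT_def
    by (simp add: vector_matrix_mul_assoc matrix_inv_left)
  have "c i0 = (\<Sum>i\<in>I. if i = i0 then c i else 0)"
    using i0 by simp
  also have "\<dots> = (\<Sum>i\<in>I. c i * (y v* M) $ i)"
    using x_I \<open>x = y v* M\<close> by (intro sum.cong) auto
  also have "\<dots> = (\<Sum>k\<in>UNIV. y $ k * (\<Sum>i\<in>I. c i * M $ k $ i))"
    by (rule sum_vector_matrix_mult_swap)
  also have "\<dots> = 0"
    using c y_J unfolding y_def by (intro sum.neutral) auto
  finally show ?thesis .
qed

lemma linear_AONT_card_zero_rows: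
  fixes M :: "'a::{finite,field}^'s::finite^'s"
  assumes aont: "linear_AONT ti to M" and I: "card I = ti" and c: "i0 \<in> I" "c i0 \<noteq> 0"
  shows "card {k. (\<Sum>i\<in>I. c i * M $ k $ i) = 0} < to"
proof (rule ccontr)
  assume "\<not> ?thesis"
  then have "to \<le> card {k. (\<Sum>i\<in>I. c i * M $ k $ i) = 0}"
    by simp
  then obtain K where K: "K \<subseteq> {k. (\<Sum>i\<in>I. c i * M $ k $ i) = 0}" "card K = to"
    by (meson obtain_subset_with_card_n)
  then have "\<forall>k\<in>K. (\<Sum>i\<in>I. c i * M $ k $ i) = 0"
    by blast
  then show False
    using linear_AONT_submatrix_kernel[OF aont I K(2) _ c(1)] c(2) by blast
qed

theorem theoremT1:
  fixes M :: "('a::{finite,field}) ^'s::finite^'s" and ti to :: nat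
  assumes "linear_AONT ti to M" and "2 \<le> ti" and "ti \<le> to"
  shows "real CARD('s) \<le>
           (real to - 1) * (real CARD('a) ^ ti - 1) / ((real ti - 1) * (real CARD('a) - 1))"
proof -
  have "ti \<le> CARD('s)"
    using assms(1) unfolding linear_AONT_def by simp
  then obtain I :: "'s set" where I: "card I = ti"
    by (meson obtain_subset_with_card_n)
  then have "I \<noteq> {}"
    using assms(2) by auto
  define C where "C = {c \<in> I \<rightarrow>\<^sub>E (UNIV :: 'a set). \<exists>i\<in>I. c i \<noteq> 0}"
  have "CARD('s) * (CARD('a) ^ (ti - 1) - 1) \<le> card C * (to - 1)"
  proof (rule double_counting_le[where R = "\<lambda>c k. (\<Sum>i\<in>I. c i * M $ k $ i) = 0"])
    show "CARD('a) ^ (ti - 1) - 1 \<le> card {c \<in> C. (\<Sum>i\<in>I. c i * M $ k $ i) = 0}" for k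
      using card_PiE_nonzero_linear_equation_ge[of I "\<lambda>i. M $ k $ i"] \<open>I \<noteq> {}\<close> I
      unfolding C_def by simp
    show "card {k \<in> UNIV. (\<Sum>i\<in>I. c i * M $ k $ i) = 0} \<le> to - 1" if "c \<in> C" for c
      using that linear_AONT_card_zero_rows[OF assms(1) I] unfolding C_def by fastforce
  qed (auto simp: C_def intro: finite_subset[OF _ finite_PiE])
  moreover have "card C = CARD('a) ^ ti - 1"
    using I unfolding C_def by (simp add: card_PiE_nonzero)
  ultimately have "CARD('s) * (CARD('a) ^ (ti - 1) - 1) \<le> (CARD('a) ^ ti - 1) * (to - 1)"
    by simp
  then show ?thesis
    using assms(2,3) by (intro real_bound_from_count card_UNIV_field_ge_2) simp_all
qed

end
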